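(* Let $(G,\mathbf p)$ be a framework (with $\mathbf p$ pinned with $\ell$-dimensional affine span) with $\dim(K)=1$, let $E$ be a stiff-bar energy at $\mathbf p$, and let $f(\delta\mathbf p)=E(\mathbf p+\delta\mathbf p)-E(\mathbf p)$. Let $k\ge2$ and suppose $(G,\mathbf p)$ has a $(1,k-1)$-flex $\mathbf p+\mathbf p't+\mathbf p''t^2+\cdots+\mathbf p^{(k-1)}t^{k-1}$ with $|\mathbf p'|=1$ and $\mathbf p^{(j)}\in\overline K$ for $2\le j\le k-1$. Consider the family $\delta\mathbf p(t;y_0,\mathbf p_0^{(k)})=y_0\mathbf p't+y_0^2\mathbf p''t^2+\cdots+y_0^{k-1}\mathbf p^{(k-1)}t^{k-1}+\mathbf p_0^{(k)}t^k$, with $(y_0,\mathbf p_0^{(k)})$ in the unit sphere of $\mathbb R\times\overline K$, and let $a_{2k}(y_0,\mathbf p_0^{(k)})$ be the coefficient of $t^{2k}$ in the Taylor expansion of $f(\delta\mathbf p(t;y_0,\mathbf p_0^{(k)}))$ at $t=0$. Suppose the $2k$-th derivative test is inconclusive, i.e. $a_{2k}$ is neither positive everywhere on the sphere, nor negative everywhere, nor takes both positive and negative values. If $(y_0,\mathbf p_0^{(k)})$ is a parameter on the sphere such that $f(\delta\mathbf p(t;y_0,\mathbf p_0^{(k)}))$ vanishes through order $2k$ (all Taylor coefficients of orders $0,\dots,2k$ are zero), then $y_0\ne0$; in particular the trajectory $\mathbf p+\delta\mathbf p(t;y_0,\mathbf p_0^{(k)})$ is $1$-active.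
   Context: Fix a dimension $d$. A configuration is $\mathbf p=(\mathbf p_1,\dots,\mathbf p_n)$, $\mathbf p_i\in\mathbb R^d$; a framework $(G,\mathbf p)$ consists of a graph $G$ on $\{1,\dots,n\}$ and a configuration. A configuration $\mathbf q$ is in $\ell$-pinned position if $\mathbf q_1=0$ and, for $2\le i\le\ell+1$, $\mathbf q_i\in\mathrm{span}(e_1,\dots,e_{i-1})$; these form the $\ell$-pinned configuration space, on which $f$ and $E$ are defined. $\mathbf p$ is pinned if it has $\ell$-dimensional affine span, $\mathbf p_1,\dots,\mathbf p_{\ell+1}$ are affinely independent, and $\mathbf p$ is in $\ell$-pinned position. A $C^k$ function $\varphi(t)$ is $k$-vanishing if $\varphi^{(i)}(0)=0$ for $1\le i\le k$, $k$-active if $(k-1)$-vanishing but not $k$-vanishing. With $\mathbf m(\mathbf q)=(|\mathbf q_i-\mathbf q_j|^2)_{ij\in E(G)}$, a $(j,k)$-flex is an analytic non-constant $\ell$-pinned trajectory $\mathbf p(t)$, $\mathbf p(0)=\mathbf p$, that is $j$-active with $\mathbf m(\mathbf p(t))$ $k$-vanishing. $K$ is the linear space of $\ell$-pinned $\mathbf p'$ with $(\mathbf p_v-\mathbf p_w)\cdot(\mathbf p'_v-\mathbf p'_w)=0$ for all edges $vw$, $\overline K$ a fixed complementary subspace. A stiff-bar energy at $\mathbf p$ is $E(\mathbf q)=\sum_{ij\in E(G)}E_{ij}(|\mathbf q_i-\mathbf q_j|)$, each $E_{ij}$ analytic at $d_{ij}=|\mathbf p_i-\mathbf p_j|\ne0$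 with a strict local minimum there and $E_{ij}''(d_{ij})>0$. *)

theory Defs
  imports "HOL-Analysis.Analysis"
begin

text \<open>Vertices are 0..n-1 (paper vertex i is our vertex i-1), coordinates are
0..d-1 (paper axis e_c is our coordinate c-1). A configuration is a function
q :: nat => nat => real, q i c being coordinate c of point i, required to vanish outside
i < n, c < d.\<close>

type_synonym config = "nat \<Rightarrow> nat \<Rightarrow> real"

definition czero :: config where "czero = (\<lambda>i c. 0)"
definition cadd :: "config \<Rightarrow> config \<Rightarrow> config" where "cadd x y = (\<lambda>i c. x i c + y i c)"
definition cscale :: "real \<Rightarrow> config \<Rightarrow> config" where "cscale a x = (\<lambda>i c. a * x i c)"
definition csum :: "(nat \<Rightarrow> config) \<Rightarrow> nat set \<Rightarrow> config" where
  "csum f A = (\<lambda>i c. \<Sum>j\<in>A. f j i c)"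
definition cinner :: "nat \<Rightarrow> nat \<Rightarrow> config \<Rightarrow> config \<Rightarrow> real" where
  "cinner n d x y = (\<Sum>i<n. \<Sum>c<d. x i c * y i c)"
definition cnorm :: "nat \<Rightarrow> nat \<Rightarrow> config \<Rightarrow> real" where
  "cnorm n d x = sqrt (cinner n d x x)"

definition in_support :: "nat \<Rightarrow> nat \<Rightarrow> config \<Rightarrow> bool" where
  "in_support n d q \<longleftrightarrow> (\<forall>i c. (n \<le> i \<or> d \<le> c) \<longrightarrow> q i c = 0)"

text \<open>l-pinned position: q_1 = 0 and q_i in span(e_1..e_{i-1}) for 2 <= i <= l+1 (paper indexing).\<close>
definition pinned_pos :: "nat \<Rightarrow> nat \<Rightarrow> nat \<Rightarrow> config \<Rightarrow> bool" where
  "pinned_pos n d l q \<longleftrightarrow> in_support n d q \<and> (\<forall>c. q 0 c = 0) \<and>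
     (\<forall>i. 1 \<le> i \<and> i \<le> l \<longrightarrow> (\<forall>c. i \<le> c \<longrightarrow> q i c = 0))"

definition pinned_space :: "nat \<Rightarrow> nat \<Rightarrow> nat \<Rightarrow> config set" where
  "pinned_space n d l = {q. pinned_pos n d l q}"

definition is_pinned :: "nat \<Rightarrow> nat \<Rightarrow> nat \<Rightarrow> config \<Rightarrow> bool" where
  "is_pinned n d l p \<longleftrightarrow> l < n \<and> pinned_pos n d l p \<and>
     (\<forall>a::nat\<Rightarrow>real. (\<forall>c. (\<Sum>i\<in>{1..l}. a i * (p i c - p 0 c)) = 0) \<longrightarrow> (\<forall>i\<in>{1..l}. a i = 0)) \<and>
     (\<forall>j<n. \<exists>a::nat\<Rightarrow>real. \<forall>c. p j c - p 0 c = (\<Sum>i\<in>{1..l}. a i * (p i c - p 0 c)))"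

definition graph_ok :: "nat \<Rightarrow> (nat \<times> nat) set \<Rightarrow> bool" where
  "graph_ok n G \<longleftrightarrow> (\<forall>(i,j)\<in>G. i < j \<and> j < n)"

definition elen :: "nat \<Rightarrow> config \<Rightarrow> nat \<Rightarrow> nat \<Rightarrow> real" where
  "elen d q i j = sqrt (\<Sum>c<d. (q i c - q j c)^2)"

definition Kspace :: "nat \<Rightarrow> nat \<Rightarrow> nat \<Rightarrow> (nat \<times> nat) set \<Rightarrow> config \<Rightarrow> config set" where
  "Kspace n d l G p = {q \<in> pinned_space n d l.
      \<forall>(v,w)\<in>G. (\<Sum>c<d. (p v c - p w c) * (q v c - q w c)) = 0}"

definition dim_one :: "config set \<Rightarrow> bool" where
  "dim_one K \<longleftrightarrow> (\<exists>v\<in>K. v \<noteq> czero \<and> (\<forall>w\<in>K. \<exists>a. w = cscale a v))"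

definition is_complement :: "nat \<Rightarrow> nat \<Rightarrow> nat \<Rightarrow> config set \<Rightarrow> config set \<Rightarrow> bool" where
  "is_complement n d l K Kb \<longleftrightarrow> Kb \<subseteq> pinned_space n d l \<and> czero \<in> Kb \<and>
     (\<forall>x\<in>Kb. \<forall>y\<in>Kb. cadd x y \<in> Kb) \<and> (\<forall>a. \<forall>x\<in>Kb. cscale a x \<in> Kb) \<and>
     K \<inter> Kb = {czero} \<and>
     (\<forall>q\<in>pinned_space n d l. \<exists>u\<in>K. \<exists>w\<in>Kb. q = cadd u w)"

definition real_analytic_at :: "(real \<Rightarrow> real) \<Rightarrow> real \<Rightarrow> bool" where
  "real_analytic_at g x \<longleftrightarrow> (\<exists>r>0. \<exists>a::nat\<Rightarrow>real.
      \<forall>y. \<bar>y - x\<bar> < r \<longrightarrow> (\<lambda>m. a m * (y - x)^m) sums g y)"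

definition stiff_bar :: "nat \<Rightarrow> (nat \<times> nat) set \<Rightarrow> config \<Rightarrow> (nat \<Rightarrow> nat \<Rightarrow> real \<Rightarrow> real) \<Rightarrow> bool" where
  "stiff_bar d G p Es \<longleftrightarrow> (\<forall>(i,j)\<in>G.
      elen d p i j \<noteq> 0 \<and> real_analytic_at (Es i j) (elen d p i j) \<and>
      (\<exists>r>0. \<forall>x. 0 < \<bar>x - elen d p i j\<bar> \<and> \<bar>x - elen d p i j\<bar> < r \<longrightarrow>
                  Es i j (elen d p i j) < Es i j x) \<and>
      (deriv ^^ 2) (Es i j) (elen d p i j) > 0)"

definition energy :: "nat \<Rightarrow> (nat \<times> nat) set \<Rightarrow> (nat \<Rightarrow> nat \<Rightarrow> real \<Rightarrow> real) \<Rightarrow> config \<Rightarrow> real" where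
  "energy d G Es q = (\<Sum>(i,j)\<in>G. Es i j (elen d q i j))"

definition fdelta :: "nat \<Rightarrow> (nat \<times> nat) set \<Rightarrow> (nat \<Rightarrow> nat \<Rightarrow> real \<Rightarrow> real) \<Rightarrow> config \<Rightarrow> config \<Rightarrow> real" where
  "fdelta d G Es p dp = energy d G Es (cadd p dp) - energy d G Es p"

definition k_vanishing :: "nat \<Rightarrow> (real \<Rightarrow> real) \<Rightarrow> bool" where
  "k_vanishing k g \<longleftrightarrow> (\<forall>i\<in>{1..k}. (deriv ^^ i) g 0 = 0)"

definition k_active :: "nat \<Rightarrow> (real \<Rightarrow> real) \<Rightarrow> bool" where
  "k_active k g \<longleftrightarrow> k_vanishing (k - 1) g \<and> \<not> k_vanishing k g"

definition traj_vanishing :: "nat \<Rightarrow> (real \<Rightarrow> config) \<Rightarrow> bool" where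
  "traj_vanishing k tr \<longleftrightarrow> (\<forall>i c. k_vanishing k (\<lambda>t. tr t i c))"

definition traj_active :: "nat \<Rightarrow> (real \<Rightarrow> config) \<Rightarrow> bool" where
  "traj_active k tr \<longleftrightarrow> traj_vanishing (k - 1) tr \<and> \<not> traj_vanishing k tr"

definition is_flex :: "nat \<Rightarrow> nat \<Rightarrow> nat \<Rightarrow> (nat \<times> nat) set \<Rightarrow> config \<Rightarrow> nat \<Rightarrow> nat \<Rightarrow> (real \<Rightarrow> config) \<Rightarrow> bool" where
  "is_flex n d l G p j k tr \<longleftrightarrow>
     (\<forall>i c. real_analytic_at (\<lambda>t. tr t i c) 0) \<and>
     (\<forall>t. pinned_pos n d l (tr t)) \<and>
     (\<forall>e>0. \<exists>t. \<bar>t\<bar> < e \<and> tr t \<noteq> tr 0) \<and>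
     tr 0 = p \<and> traj_active j tr \<and>
     (\<forall>(v,w)\<in>G. k_vanishing k (\<lambda>t. (elen d (tr t) v w)^2))"

definition taylor_coeff :: "(real \<Rightarrow> real) \<Rightarrow> nat \<Rightarrow> real" where
  "taylor_coeff g m = (deriv ^^ m) g 0 / fact m"

definition dp_family :: "nat \<Rightarrow> (nat \<Rightarrow> config) \<Rightarrow> real \<Rightarrow> config \<Rightarrow> real \<Rightarrow> config" where
  "dp_family k P y0 q t = cadd (csum (\<lambda>j. cscale (y0^j * t^j) (P j)) {1..k-1}) (cscale (t^k) q)"

end

theory Submission
  imports Defs
begin

text \<open>If \<open>y\<^sub>0 = 0\<close>, the trajectory is \<open>\<delta>p(t) = t\<^sup>k q\<^sub>0\<close> with \<open>q\<^sub>0\<close> a nonzero vector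
of the complement of \<open>K\<close>, so \<open>q\<^sub>0\<close> is not an infinitesimal flex and some bar \<open>ij\<close> changes
length to first order along the line \<open>p + s q\<^sub>0\<close>. Every bar energy has a strict minimum at
the rest length with positive second derivative, so the energy along this line grows at least
like \<open>c s\<^sup>2\<close>, and hence \<open>f(\<delta>p(t)) \<ge> c t\<^sup>2\<^sup>k\<close>. But \<open>f(\<delta>p(t))\<close> is smooth near \<open>0\<close> and
flat to order \<open>2k\<close>, so by Taylor's theorem it is \<open>o(t\<^sup>2\<^sup>k)\<close>, a contradiction. Once
\<open>y\<^sub>0 \<noteq> 0\<close>, the velocity of the trajectory at \<open>0\<close> is \<open>y\<^sub>0 p'\<close> with \<open>|p'| = 1\<close>, so it is
1-active.\<close>

section \<open>Functions with several derivatives\<close>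

definition higher_differentiable_on :: "nat \<Rightarrow> real set \<Rightarrow> (real \<Rightarrow> real) \<Rightarrow> bool" where
  "higher_differentiable_on m U f \<longleftrightarrow>
     (\<forall>j<m. \<forall>y\<in>U. ((deriv ^^ j) f has_real_derivative (deriv ^^ Suc j) f y) (at y))"

lemma higher_differentiable_on_0 [simp]: "higher_differentiable_on 0 U f"
  by (simp add: higher_differentiable_on_def)

lemma higher_differentiable_on_Suc:
  "higher_differentiable_on (Suc m) U f \<longleftrightarrow>
     (\<forall>y\<in>U. (f has_real_derivative deriv f y) (at y)) \<and> higher_differentiable_on m U (deriv f)"
  unfolding higher_differentiable_on_def
  by (auto simp: less_Suc_eq_0_disj funpow_Suc_right simp del: funpow.simps)

lemma higher_differentiable_on_mono:
  "m' \<le> m \<Longrightarrow> higher_differentiable_on m U f \<Longrightarrow> higher_differentiable_on m' U f"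
  by (auto simp: higher_differentiable_on_def)

lemma higher_differentiable_on_subset:
  "V \<subseteq> U \<Longrightarrow> higher_differentiable_on m U f \<Longrightarrow> higher_differentiable_on m V f"
  by (auto simp: higher_differentiable_on_def)

lemma higher_differentiable_on_cong:
  assumes "open U" "\<And>x. x \<in> U \<Longrightarrow> f x = h x" "higher_differentiable_on m U f"
  shows "higher_differentiable_on m U h"
proof -
  have "(deriv ^^ j) f y = (deriv ^^ j) h y" if "y \<in> U" for j y
    using assms(1,2) that by (intro higher_deriv_cong_ev) (auto simp: eventually_nhds)
  then show ?thesis
    using assms(1,3) unfolding higher_differentiable_on_def
    by (metis has_field_derivative_transform_within_open)
qed

lemma higher_differentiable_on_SucI:
  assumes "open U" and f': "\<And>y. y \<in> U \<Longrightarrow> (f has_real_derivative f' y) (at y)"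
    and "higher_differentiable_on m U f'"
  shows "higher_differentiable_on (Suc m) U f"
proof -
  have "deriv f y = f' y" if "y \<in> U" for y
    using f'[OF that] by (rule DERIV_imp_deriv)
  then show ?thesis
    using assms by (auto simp: higher_differentiable_on_Suc intro: higher_differentiable_on_cong)
qed

lemma higher_differentiable_on_isCont_deriv:
  "higher_differentiable_on (Suc m) U f \<Longrightarrow> x \<in> U \<Longrightarrow> isCont ((deriv ^^ m) f) x"
  unfolding higher_differentiable_on_def by (blast intro: DERIV_isCont)

lemma higher_differentiable_on_const: "higher_differentiable_on m U (\<lambda>x. c)"
proof (induction m arbitrary: c)
  case (Suc m)
  have "deriv (\<lambda>x::real. c) = (\<lambda>x. 0)"
    by (intro ext DERIV_imp_deriv) auto
  then show ?case
    using Suc by (simp add: higher_differentiable_on_Suc)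
qed simp

lemma higher_differentiable_on_id: "higher_differentiable_on m U (\<lambda>x. x)"
proof (cases m)
  case (Suc m')
  have "deriv (\<lambda>x::real. x) = (\<lambda>x. 1)"
    by (intro ext DERIV_imp_deriv) auto
  then show ?thesis
    using Suc by (simp add: higher_differentiable_on_Suc higher_differentiable_on_const)
qed simp

context
  fixes U :: "real set"
  assumes U: "open U"
begin

lemma higher_differentiable_on_add:
  "higher_differentiable_on m U f \<Longrightarrow> higher_differentiable_on m U g \<Longrightarrow>
     higher_differentiable_on m U (\<lambda>x. f x + g x)"
proof (induction m arbitrary: f g)
  case (Suc m)
  then show ?case
    by (intro higher_differentiable_on_SucI[OF U, of _ "\<lambda>x. deriv f x + deriv g x"])
      (auto simp: higher_differentiable_on_Suc intro: derivative_intros)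
qed simp

lemma higher_differentiable_on_mult:
  "higher_differentiable_on m U f \<Longrightarrow> higher_differentiable_on m U g \<Longrightarrow>
     higher_differentiable_on m U (\<lambda>x. f x * g x)"
proof (induction m arbitrary: f g)
  case (Suc m)
  have "higher_differentiable_on m U f" "higher_differentiable_on m U g"
    using Suc.prems by (auto intro: higher_differentiable_on_mono[of m "Suc m"])
  with Suc show ?case
    by (intro higher_differentiable_on_SucI[OF U, of _ "\<lambda>x. deriv f x * g x + f x * deriv g x"])
      (auto simp: higher_differentiable_on_Suc intro!: derivative_eq_intros higher_differentiable_on_add)
qed simp

lemma higher_differentiable_on_power:
  "higher_differentiable_on m U f \<Longrightarrow> higher_differentiable_on m U (\<lambda>x. f x ^ k)"
  by (induction k) (auto intro: higher_differentiable_on_const higher_differentiable_on_mult)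

lemma higher_differentiable_on_sum:
  "finite A \<Longrightarrow> (\<And>a. a \<in> A \<Longrightarrow> higher_differentiable_on m U (f a)) \<Longrightarrow>
     higher_differentiable_on m U (\<lambda>x. \<Sum>a\<in>A. f a x)"
  by (induction A rule: finite_induct)
    (auto intro: higher_differentiable_on_const higher_differentiable_on_add)

lemma higher_differentiable_on_diff:
  assumes "higher_differentiable_on m U f" "higher_differentiable_on m U g"
  shows "higher_differentiable_on m U (\<lambda>x. f x - g x)"
proof -
  have "higher_differentiable_on m U (\<lambda>x. f x + (-1) * g x)"
    using assms by (intro higher_differentiable_on_add higher_differentiable_on_mult
        higher_differentiable_on_const)
  then show ?thesis by simp
qed

lemma higher_differentiable_on_compose:
  assumes V: "open V" "g ` U \<subseteq> V"
  shows "higher_differentiable_on m V f \<Longrightarrow> higher_differentiable_on m U g \<Longrightarrow>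
           higher_differentiable_on m U (\<lambda>x. f (g x))"
proof (induction m arbitrary: f)
  case (Suc m)
  have "higher_differentiable_on m U g"
    using Suc.prems by (auto intro: higher_differentiable_on_mono[of m "Suc m"])
  with Suc have "higher_differentiable_on m U (\<lambda>x. deriv f (g x) * deriv g x)"
    by (auto simp: higher_differentiable_on_Suc intro: higher_differentiable_on_mult)
  moreover have "((\<lambda>x. f (g x)) has_real_derivative deriv f (g y) * deriv g y) (at y)" if "y \<in> U" for y
    using Suc.prems V that by (intro DERIV_chain2) (auto simp: higher_differentiable_on_Suc)
  ultimately show ?case
    by (rule higher_differentiable_on_SucI[OF U, rotated])
qed simp

end

lemma higher_differentiable_on_inverse: "higher_differentiable_on m {0<..} inverse"
proof (induction m)
  case (Suc m)
  have "higher_differentiable_on m {0<..} (\<lambda>x::real. (-1) * (inverse x * inverse x))"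
    using Suc by (intro higher_differentiable_on_mult higher_differentiable_on_const) auto
  then show ?case
    by (rule higher_differentiable_on_SucI[OF open_greaterThan, rotated])
      (auto intro!: derivative_eq_intros simp: power2_eq_square)
qed simp

lemma higher_differentiable_on_sqrt: "higher_differentiable_on m {0<..} sqrt"
proof (induction m)
  case (Suc m)
  have "higher_differentiable_on m {0<..} (\<lambda>x. inverse (sqrt x))"
    by (rule higher_differentiable_on_compose[OF open_greaterThan open_greaterThan _
          higher_differentiable_on_inverse Suc]) auto
  then have "higher_differentiable_on m {0<..} (\<lambda>x. inverse (sqrt x) * (1/2))"
    by (intro higher_differentiable_on_mult higher_differentiable_on_const) auto
  then show ?case
    by (rule higher_differentiable_on_SucI[OF open_greaterThan, rotated])
      (auto intro: DERIV_real_sqrt)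
qed simp

lemma higher_differentiable_on_powser:
  "(\<And>z. \<bar>z\<bar> < r \<Longrightarrow> summable (\<lambda>n. c n * z ^ n)) \<Longrightarrow>
     higher_differentiable_on m (ball 0 r) (\<lambda>z. \<Sum>n. c n * z ^ n)"
proof (induction m arbitrary: c)
  case (Suc m)
  have "higher_differentiable_on m (ball 0 r) (\<lambda>z. \<Sum>n. diffs c n * z ^ n)"
    by (rule Suc.IH) (rule termdiff_converges[of _ r], use Suc.prems in auto)
  moreover have "((\<lambda>z. \<Sum>n. c n * z ^ n) has_real_derivative (\<Sum>n. diffs c n * y ^ n)) (at y)"
    if "y \<in> ball 0 r" for y
    by (rule termdiffs_strong[of _ "(\<bar>y\<bar> + r) / 2"]) (use that Suc.prems in auto)
  ultimately show ?case
    by (rule higher_differentiable_on_SucI[OF open_ball, rotated])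
qed simp

lemma real_analytic_at_higher_differentiable_on:
  assumes "real_analytic_at f x0"
  obtains R where "R > 0" "\<And>m. higher_differentiable_on m (ball x0 R) f"
proof -
  obtain r a where r: "r > 0"
    and sums: "\<And>y. \<bar>y - x0\<bar> < r \<Longrightarrow> (\<lambda>m. a m * (y - x0) ^ m) sums f y"
    using assms unfolding real_analytic_at_def by blast
  have "higher_differentiable_on m (ball x0 r) f" for m
  proof -
    have "higher_differentiable_on m (ball 0 r) (\<lambda>z. \<Sum>n. a n * z ^ n)"
      by (rule higher_differentiable_on_powser) (use sums[of "_ + x0"] in \<open>auto simp: sums_iff\<close>)
    then have "higher_differentiable_on m (ball x0 r) (\<lambda>y. \<Sum>n. a n * (y - x0) ^ n)"
      by (rule higher_differentiable_on_compose[OF open_ball open_ball, rotated])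
        (auto simp: dist_real_def intro: higher_differentiable_on_diff higher_differentiable_on_id
          higher_differentiable_on_const)
    then show ?thesis
      by (rule higher_differentiable_on_cong[OF open_ball, rotated])
        (use sums in \<open>auto simp: dist_real_def sums_iff\<close>)
  qed
  with r that show ?thesis by blast
qed

section \<open>Taylor expansion and growth near a minimum\<close>

lemma higher_differentiable_on_taylor:
  fixes g :: "real \<Rightarrow> real"
  assumes g: "higher_differentiable_on N U g" and N: "0 < N" and "x \<noteq> x0"
    and U: "\<And>t. \<bar>t - x0\<bar> \<le> \<bar>x - x0\<bar> \<Longrightarrow> t \<in> U"
  obtains t where "\<bar>t - x0\<bar> < \<bar>x - x0\<bar>"
    "g x = (\<Sum>m<N. (deriv ^^ m) g x0 / fact m * (x - x0) ^ m) + (deriv ^^ N) g t / fact N * (x - x0) ^ N"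
proof -
  have "\<exists>t. (if x < x0 then x < t \<and> t < x0 else x0 < t \<and> t < x) \<and>
      g x = (\<Sum>m<N. (deriv ^^ m) g x0 / fact m * (x - x0) ^ m) + (deriv ^^ N) g t / fact N * (x - x0) ^ N"
  proof (rule Taylor[of N "\<lambda>m. (deriv ^^ m) g" g "min x x0" "max x x0"])
    show "\<forall>m t. m < N \<and> min x x0 \<le> t \<and> t \<le> max x x0 \<longrightarrow>
        ((deriv ^^ m) g has_real_derivative (deriv ^^ Suc m) g t) (at t)"
      using g U by (auto simp: higher_differentiable_on_def)
  qed (use N \<open>x \<noteq> x0\<close> in auto)
  then obtain t where between: "if x < x0 then x < t \<and> t < x0 else x0 < t \<and> t < x"
    and "g x = (\<Sum>m<N. (deriv ^^ m) g x0 / fact m * (x - x0) ^ m) + (deriv ^^ N) g t / fact N * (x - x0) ^ N"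
    by blast
  moreover from between have "\<bar>t - x0\<bar> < \<bar>x - x0\<bar>"
    by (auto split: if_splits)
  ultimately show ?thesis
    using that by blast
qed

lemma taylor_peano_remainder:
  fixes g :: "real \<Rightarrow> real"
  assumes U: "open U" "x0 \<in> U" and g: "higher_differentiable_on N U g" and N: "0 < N"
    and cont: "isCont ((deriv ^^ N) g) x0" and \<epsilon>: "\<epsilon> > 0"
  shows "eventually (\<lambda>x. \<bar>g x - (\<Sum>m\<le>N. (deriv ^^ m) g x0 / fact m * (x - x0) ^ m)\<bar>
                           \<le> \<epsilon> * \<bar>x - x0\<bar> ^ N) (nhds x0)"
proof -
  obtain \<delta> where \<delta>: "\<delta> > 0"
    and close: "\<And>y. dist y x0 < \<delta> \<Longrightarrow> dist ((deriv ^^ N) g y) ((deriv ^^ N) g x0) < \<epsilon> * fact N"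
    using cont \<epsilon> unfolding continuous_at_eps_delta by (metis fact_gt_zero mult_pos_pos)
  obtain e where e: "e > 0" "ball x0 e \<subseteq> U"
    using U openE by blast
  show ?thesis unfolding eventually_nhds_metric
  proof (intro exI[of _ "min \<delta> e"] conjI allI impI)
    fix x assume x: "dist x x0 < min \<delta> e"
    show "\<bar>g x - (\<Sum>m\<le>N. (deriv ^^ m) g x0 / fact m * (x - x0) ^ m)\<bar> \<le> \<epsilon> * \<bar>x - x0\<bar> ^ N"
    proof (cases "x = x0")
      case False
      obtain t where t: "\<bar>t - x0\<bar> < \<bar>x - x0\<bar>"
        and taylor: "g x = (\<Sum>m<N. (deriv ^^ m) g x0 / fact m * (x - x0) ^ m)
                            + (deriv ^^ N) g t / fact N * (x - x0) ^ N"
        by (rule higher_differentiable_on_taylor[OF g N False])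
          (use x e in \<open>auto simp: dist_real_def subset_iff\<close>)
      have "g x - (\<Sum>m\<le>N. (deriv ^^ m) g x0 / fact m * (x - x0) ^ m)
          = ((deriv ^^ N) g t - (deriv ^^ N) g x0) / fact N * (x - x0) ^ N"
        by (simp add: taylor lessThan_Suc_atMost[symmetric] diff_divide_distrib algebra_simps)
      also have "\<bar>\<dots>\<bar> \<le> \<epsilon> * \<bar>x - x0\<bar> ^ N"
      proof -
        have "\<bar>(deriv ^^ N) g t - (deriv ^^ N) g x0\<bar> / fact N \<le> \<epsilon>"
          using close[of t] t x by (simp add: dist_real_def pos_divide_le_eq)
        then have "\<bar>(deriv ^^ N) g t - (deriv ^^ N) g x0\<bar> / fact N * \<bar>x - x0\<bar> ^ N
            \<le> \<epsilon> * \<bar>x - x0\<bar> ^ N"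
          by (rule mult_right_mono) simp
        then show ?thesis
          by (simp add: abs_mult power_abs)
      qed
      finally show ?thesis .
    qed (use N in \<open>cases N, simp_all add: sum.atMost_Suc_shift\<close>)
  qed (use \<delta> e in auto)
qed

lemma flat_not_eventually_ge_power:
  fixes g :: "real \<Rightarrow> real"
  assumes U: "open U" "0 \<in> U" and g: "higher_differentiable_on N U g" and N: "0 < N"
    and cont: "isCont ((deriv ^^ N) g) 0" and flat: "\<forall>m\<le>N. (deriv ^^ m) g 0 = 0" and c: "c > 0"
  shows "\<not> eventually (\<lambda>h. c * h ^ N \<le> g h) (at_right 0)"
proof
  assume above: "eventually (\<lambda>h. c * h ^ N \<le> g h) (at_right 0)"
  have "eventually (\<lambda>h. \<bar>g h\<bar> \<le> c / 2 * \<bar>h\<bar> ^ N) (nhds 0)"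
    using taylor_peano_remainder[OF U g N _, of "c / 2"] cont flat c by simp
  then have below: "eventually (\<lambda>h. \<bar>g h\<bar> \<le> c / 2 * \<bar>h\<bar> ^ N) (at_right 0)"
    by (auto simp: eventually_at_filter elim: eventually_mono)
  have "eventually (\<lambda>h::real. False) (at_right 0)"
    using above below eventually_at_right_less[of 0]
  proof eventually_elim
    case (elim h)
    then have "c * h ^ N \<le> c / 2 * h ^ N" by simp
    with c \<open>h > 0\<close> show False by simp
  qed
  then show False by simp
qed

lemma eventually_quadratic_growth_at_critical_point:
  fixes f :: "real \<Rightarrow> real"
  assumes U: "open U" "x0 \<in> U" and f: "higher_differentiable_on 2 U f"
    and cont: "isCont ((deriv ^^ 2) f) x0" and crit: "deriv f x0 = 0" and pos: "(deriv ^^ 2) f x0 > 0"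
  shows "eventually (\<lambda>x. (deriv ^^ 2) f x0 / 4 * (x - x0) ^ 2 \<le> f x - f x0) (nhds x0)"
proof -
  have "eventually (\<lambda>x. \<bar>f x - (\<Sum>m\<le>2. (deriv ^^ m) f x0 / fact m * (x - x0) ^ m)\<bar>
                         \<le> (deriv ^^ 2) f x0 / 4 * \<bar>x - x0\<bar> ^ 2) (nhds x0)"
    using taylor_peano_remainder[OF U f _ cont, of "(deriv ^^ 2) f x0 / 4"] pos by simp
  then show ?thesis
  proof eventually_elim
    case (elim x)
    have "(\<Sum>m\<le>2. (deriv ^^ m) f x0 / fact m * (x - x0) ^ m) = f x0 + (deriv ^^ 2) f x0 / 2 * (x - x0) ^ 2"
      using crit by (simp add: numeral_2_eq_2)
    with elim show ?case
      unfolding power2_abs abs_le_iff by linarith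
  qed
qed

lemma eventually_linear_growth:
  fixes g :: "real \<Rightarrow> real"
  assumes "(g has_real_derivative L) (at 0)" and "L \<noteq> 0"
  shows "eventually (\<lambda>s. \<bar>L\<bar> / 2 * \<bar>s\<bar> \<le> \<bar>g s - g 0\<bar>) (nhds 0)"
proof -
  have "((\<lambda>s. (g s - g 0) / s) \<longlongrightarrow> L) (at 0)"
    using assms(1) by (simp add: has_field_derivative_iff)
  then have "eventually (\<lambda>s. dist ((g s - g 0) / s) L < \<bar>L\<bar> / 2) (at 0)"
    using assms(2) by (intro tendstoD) auto
  then have "eventually (\<lambda>s. s \<noteq> 0 \<longrightarrow> \<bar>L\<bar> / 2 \<le> \<bar>(g s - g 0) / s\<bar>) (nhds 0)"
    unfolding eventually_at_filter
  proof eventually_elim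
    case (elim s)
    show ?case
    proof
      assume "s \<noteq> 0"
      with elim have "\<bar>(g s - g 0) / s - L\<bar> < \<bar>L\<bar> / 2"
        by (simp add: dist_real_def)
      then show "\<bar>L\<bar> / 2 \<le> \<bar>(g s - g 0) / s\<bar>"
        by linarith
    qed
  qed
  then show ?thesis
  proof eventually_elim
    case (elim s)
    show ?case
    proof (cases "s = 0")
      case False
      then have "\<bar>L\<bar> / 2 * \<bar>s\<bar> \<le> \<bar>(g s - g 0) / s\<bar> * \<bar>s\<bar>"
        using elim by (intro mult_right_mono) auto
      with False show ?thesis by (simp add: abs_divide)
    qed simp
  qed
qed

lemma eventually_quadratic_growth_along_curve:
  fixes f x :: "real \<Rightarrow> real"
  assumes U: "open U" "x 0 \<in> U" and f: "higher_differentiable_on 2 U f"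
    and cont: "isCont ((deriv ^^ 2) f) (x 0)"
    and crit: "deriv f (x 0) = 0" and pos: "(deriv ^^ 2) f (x 0) > 0"
    and x: "(x has_real_derivative L) (at 0)" and L: "L \<noteq> 0"
  obtains c where "c > 0" "eventually (\<lambda>s. c * s ^ 2 \<le> f (x s) - f (x 0)) (nhds 0)"
proof -
  define D where "D = (deriv ^^ 2) f (x 0)"
  have "isCont x 0"
    using x by (rule DERIV_isCont)
  then have "filterlim x (nhds (x 0)) (nhds 0)"
    by (simp add: isCont_def tendsto_at_iff_tendsto_nhds)
  with eventually_quadratic_growth_at_critical_point[OF U f cont crit pos]
  have quad: "eventually (\<lambda>s. D / 4 * (x s - x 0) ^ 2 \<le> f (x s) - f (x 0)) (nhds 0)"
    unfolding D_def by (rule eventually_compose_filterlim)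
  have "eventually (\<lambda>s. D / 4 * (\<bar>L\<bar> / 2) ^ 2 * s ^ 2 \<le> f (x s) - f (x 0)) (nhds 0)"
    using quad eventually_linear_growth[OF x L]
  proof eventually_elim
    case (elim s)
    have "(\<bar>L\<bar> / 2 * \<bar>s\<bar>) ^ 2 \<le> (x s - x 0) ^ 2"
      using elim(2) power_mono[of "\<bar>L\<bar> / 2 * \<bar>s\<bar>" "\<bar>x s - x 0\<bar>" 2] by (simp add: power2_abs)
    then have "D / 4 * (\<bar>L\<bar> / 2 * \<bar>s\<bar>) ^ 2 \<le> D / 4 * (x s - x 0) ^ 2"
      using pos by (intro mult_left_mono) (auto simp: D_def)
    moreover have "D / 4 * (\<bar>L\<bar> / 2) ^ 2 * s ^ 2 = D / 4 * (\<bar>L\<bar> / 2 * \<bar>s\<bar>) ^ 2"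
      by (simp add: power_mult_distrib power_divide)
    ultimately show ?case
      using elim(1) by linarith
  qed
  moreover have "D / 4 * (\<bar>L\<bar> / 2) ^ 2 > 0"
    using pos L by (simp add: D_def)
  ultimately show ?thesis
    using that by blast
qed

lemma strict_local_min_deriv_eq_0:
  fixes f :: "real \<Rightarrow> real"
  assumes "f differentiable (at y)" and "\<exists>r>0. \<forall>x. 0 < \<bar>x - y\<bar> \<and> \<bar>x - y\<bar> < r \<longrightarrow> f y < f x"
  shows "deriv f y = 0"
proof -
  obtain r where "r > 0" and min: "\<And>x. 0 < \<bar>x - y\<bar> \<Longrightarrow> \<bar>x - y\<bar> < r \<Longrightarrow> f y < f x"
    using assms(2) by blast
  have le: "\<forall>x. \<bar>y - x\<bar> < r \<longrightarrow> f y \<le> f x"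
    using min by (metis abs_minus_commute less_eq_real_def zero_less_abs_iff right_minus_eq)
  have "DERIV f y :> deriv f y"
    using assms(1) by (simp add: DERIV_deriv_iff_real_differentiable)
  then show ?thesis
    using \<open>r > 0\<close> le by (rule DERIV_local_min)
qed

lemma eventually_ge_strict_local_min:
  fixes f :: "real \<Rightarrow> real"
  assumes "\<exists>r>0. \<forall>x. 0 < \<bar>x - y\<bar> \<and> \<bar>x - y\<bar> < r \<longrightarrow> f y < f x" and "(g \<longlongrightarrow> y) F"
  shows "eventually (\<lambda>s. f y \<le> f (g s)) F"
proof -
  obtain r where "r > 0" and min: "\<And>x. 0 < \<bar>x - y\<bar> \<Longrightarrow> \<bar>x - y\<bar> < r \<Longrightarrow> f y < f x"
    using assms(1) by blast
  from tendstoD[OF assms(2) \<open>r > 0\<close>] show ?thesis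
    by eventually_elim (metis dist_real_def less_eq_real_def min order_refl zero_less_abs_iff right_minus_eq)
qed

section \<open>Energy along a straight line in configuration space\<close>

lemma graph_ok_finite: "graph_ok n G \<Longrightarrow> finite G"
  unfolding graph_ok_def by (rule finite_subset[of _ "{..<n} \<times> {..<n}"]) auto

lemma stiff_bar_edgeD:
  assumes "stiff_bar d G p Es" "(i, j) \<in> G"
  shows "elen d p i j > 0"
    and "real_analytic_at (Es i j) (elen d p i j)"
    and "\<exists>r>0. \<forall>x. 0 < \<bar>x - elen d p i j\<bar> \<and> \<bar>x - elen d p i j\<bar> < r \<longrightarrow>
                   Es i j (elen d p i j) < Es i j x"
    and "(deriv ^^ 2) (Es i j) (elen d p i j) > 0"
proof -
  have "elen d p i j \<ge> 0"
    by (simp add: elen_def sum_nonneg)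
  then show "elen d p i j > 0"
    using assms by (auto simp: stiff_bar_def)
qed (use assms in \<open>auto simp: stiff_bar_def\<close>)

lemma elen_cadd_cscale:
  "elen d (cadd p (cscale s q)) i j = sqrt (\<Sum>c<d. (p i c - p j c + s * (q i c - q j c)) ^ 2)"
  by (simp add: elen_def cadd_def cscale_def algebra_simps)

lemma elen_line_has_real_derivative:
  assumes "elen d p i j \<noteq> 0"
  shows "((\<lambda>s. elen d (cadd p (cscale s q)) i j) has_real_derivative
           (\<Sum>c<d. (p i c - p j c) * (q i c - q j c)) / elen d p i j) (at 0)"
proof -
  define S where "S s = (\<Sum>c<d. (p i c - p j c + s * (q i c - q j c)) ^ 2)" for s
  have "S 0 \<noteq> 0"
    using assms by (simp add: S_def elen_def)
  moreover have "S 0 \<ge> 0"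
    by (simp add: S_def sum_nonneg)
  ultimately have "DERIV sqrt (S 0) :> inverse (sqrt (S 0)) / 2"
    by (intro DERIV_real_sqrt) simp
  moreover have "(S has_real_derivative 2 * (\<Sum>c<d. (p i c - p j c) * (q i c - q j c))) (at 0)"
    unfolding S_def by (auto intro!: derivative_eq_intros simp: sum_distrib_left mult.commute)
  ultimately have "((\<lambda>s. sqrt (S s)) has_real_derivative
      inverse (sqrt (S 0)) / 2 * (2 * (\<Sum>c<d. (p i c - p j c) * (q i c - q j c)))) (at 0)"
    by (rule DERIV_chain2)
  then show ?thesis
    unfolding elen_cadd_cscale by (simp add: elen_def S_def divide_simps)
qed

lemma fdelta_cscale:
  "fdelta d G Es p (cscale s q) =
     (\<Sum>(i, j)\<in>G. Es i j (elen d (cadd p (cscale s q)) i j) - Es i j (elen d p i j))"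
  by (simp add: fdelta_def energy_def sum_subtractf split_def)

lemma cadd_cscale_0 [simp]: "cadd p (cscale 0 q) = p"
  by (simp add: cadd_def cscale_def)

lemma stiff_bar_edge_line_ge:
  assumes stiff: "stiff_bar d G p Es" and ij: "(i, j) \<in> G"
  shows "eventually (\<lambda>s. Es i j (elen d p i j) \<le> Es i j (elen d (cadd p (cscale s q)) i j)) (nhds 0)"
proof -
  define line where "line s = elen d (cadd p (cscale s q)) i j" for s
  have "isCont line 0"
    using DERIV_isCont[OF elen_line_has_real_derivative[of d p i j q]] stiff_bar_edgeD(1)[OF stiff ij]
    by (simp add: line_def[abs_def])
  then have "(line \<longlongrightarrow> line 0) (nhds 0)"
    by (simp add: isCont_def tendsto_at_iff_tendsto_nhds)
  then have "(line \<longlongrightarrow> elen d p i j) (nhds 0)"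
    by (simp add: line_def)
  then show ?thesis
    unfolding line_def by (rule eventually_ge_strict_local_min[OF stiff_bar_edgeD(3)[OF stiff ij]])
qed

lemma stiff_bar_edge_line_quadratic_growth:
  assumes stiff: "stiff_bar d G p Es" and ij: "(i, j) \<in> G"
    and stretch: "(\<Sum>c<d. (p i c - p j c) * (q i c - q j c)) \<noteq> 0"
  obtains c where "c > 0"
    "eventually (\<lambda>s. c * s ^ 2 \<le> Es i j (elen d (cadd p (cscale s q)) i j) - Es i j (elen d p i j)) (nhds 0)"
proof -
  define E line where "E = Es i j" and "line s = elen d (cadd p (cscale s q)) i j" for s
  have line0: "line 0 = elen d p i j"
    by (simp add: line_def)
  obtain R where "R > 0" and smooth: "\<And>m. higher_differentiable_on m (ball (line 0) R) E"
    using real_analytic_at_higher_differentiable_on stiff_bar_edgeD(2)[OF stiff ij]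
    unfolding E_def line0 by blast
  have "E differentiable (at (line 0))"
    using smooth[of 1] \<open>R > 0\<close> by (auto simp: higher_differentiable_on_def real_differentiable_def)
  then have crit: "deriv E (line 0) = 0"
    using stiff_bar_edgeD(3)[OF stiff ij] unfolding E_def line0 by (rule strict_local_min_deriv_eq_0)
  have cont: "isCont ((deriv ^^ 2) E) (line 0)"
    using smooth[of 3] \<open>R > 0\<close> by (intro higher_differentiable_on_isCont_deriv[of 2]) auto
  have pos: "(deriv ^^ 2) E (line 0) > 0"
    using stiff_bar_edgeD(4)[OF stiff ij] by (simp add: E_def line0)
  have "line 0 > 0"
    using stiff_bar_edgeD(1)[OF stiff ij] by (simp add: line0)
  then have x: "(line has_real_derivative (\<Sum>c<d. (p i c - p j c) * (q i c - q j c)) / line 0) (at 0)"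
    using elen_line_has_real_derivative[of d p i j q] by (simp add: line_def[abs_def])
  have "(\<Sum>c<d. (p i c - p j c) * (q i c - q j c)) / line 0 \<noteq> 0"
    using stretch \<open>line 0 > 0\<close> by simp
  with eventually_quadratic_growth_along_curve[OF open_ball _ smooth[of 2] cont crit pos x] \<open>R > 0\<close>
  obtain c where c: "c > 0" and growth: "eventually (\<lambda>s. c * s ^ 2 \<le> E (line s) - E (line 0)) (nhds 0)"
    by auto
  show ?thesis
    by (rule that[OF c]) (use growth in \<open>simp add: E_def line_def\<close>)
qed

lemma fdelta_line_quadratic_growth:
  assumes G: "finite G" and stiff: "stiff_bar d G p Es" and e0: "(i0, j0) \<in> G"
    and stretch: "(\<Sum>c<d. (p i0 c - p j0 c) * (q i0 c - q j0 c)) \<noteq> 0"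
  obtains c where "c > 0" "eventually (\<lambda>s. c * s ^ 2 \<le> fdelta d G Es p (cscale s q)) (nhds 0)"
proof -
  define len where "len i j s = elen d (cadd p (cscale s q)) i j" for i j s
  obtain c where "c > 0" and
    growth: "eventually (\<lambda>s. c * s ^ 2 \<le> Es i0 j0 (len i0 j0 s) - Es i0 j0 (elen d p i0 j0)) (nhds 0)"
    using stiff_bar_edge_line_quadratic_growth[OF stiff e0 stretch] unfolding len_def by blast
  have "eventually (\<lambda>s. \<forall>(i, j)\<in>G. Es i j (elen d p i j) \<le> Es i j (len i j s)) (nhds 0)"
    by (rule eventually_ball_finite[OF G]) (auto simp: len_def intro: stiff_bar_edge_line_ge[OF stiff])
  then have "eventually (\<lambda>s. c * s ^ 2 \<le> fdelta d G Es p (cscale s q)) (nhds 0)"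
    using growth
  proof eventually_elim
    case (elim s)
    have "Es i0 j0 (len i0 j0 s) - Es i0 j0 (elen d p i0 j0)
        \<le> (\<Sum>(i, j)\<in>G. Es i j (len i j s) - Es i j (elen d p i j))"
      using member_le_sum[OF e0, of "\<lambda>(i, j). Es i j (len i j s) - Es i j (elen d p i j)"] elim(1) G
      by (auto simp: case_prod_beta)
    then show ?case
      using elim(2) by (simp add: fdelta_cscale len_def)
  qed
  with \<open>c > 0\<close> that show ?thesis by blast
qed

lemma stiff_bar_edge_line_higher_differentiable:
  assumes stiff: "stiff_bar d G p Es" and ij: "(i, j) \<in> G"
  obtains U where "open U" "0 \<in> U"
    "\<And>m. higher_differentiable_on m U (\<lambda>s. Es i j (elen d (cadd p (cscale s q)) i j))"
proof -
  define S where "S s = (\<Sum>c<d. (p i c - p j c + s * (q i c - q j c)) ^ 2)" for s :: real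
  obtain R where "R > 0" and smooth: "\<And>m. higher_differentiable_on m (ball (elen d p i j) R) (Es i j)"
    using real_analytic_at_higher_differentiable_on[OF stiff_bar_edgeD(2)[OF stiff ij]] by blast
  have S0: "S 0 = elen d p i j ^ 2"
    by (simp add: S_def elen_def sum_nonneg)
  have "isCont S 0"
    unfolding S_def by (intro continuous_intros)
  then have "(S \<longlongrightarrow> S 0) (nhds 0)"
    by (simp add: isCont_def tendsto_at_iff_tendsto_nhds)
  moreover from this have "((\<lambda>s. sqrt (S s)) \<longlongrightarrow> sqrt (S 0)) (nhds 0)"
    by (rule tendsto_real_sqrt)
  ultimately have "eventually (\<lambda>s. S s > 0) (nhds 0)"
    "eventually (\<lambda>s. dist (sqrt (S s)) (elen d p i j) < R) (nhds 0)"
    using stiff_bar_edgeD(1)[OF stiff ij] \<open>R > 0\<close> by (auto simp: S0 intro: order_tendstoD tendstoD)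
  then have "eventually (\<lambda>s. S s > 0 \<and> sqrt (S s) \<in> ball (elen d p i j) R) (nhds 0)"
    by eventually_elim (simp add: dist_commute)
  then obtain U where U: "open U" "0 \<in> U"
    and inside: "\<And>s. s \<in> U \<Longrightarrow> S s > 0 \<and> sqrt (S s) \<in> ball (elen d p i j) R"
    unfolding eventually_nhds by blast
  have "higher_differentiable_on m U S" for m
    unfolding S_def
    by (intro higher_differentiable_on_sum higher_differentiable_on_power higher_differentiable_on_add
        higher_differentiable_on_mult higher_differentiable_on_const higher_differentiable_on_id U finite_lessThan)
  then have "higher_differentiable_on m U (\<lambda>s. sqrt (S s))" for m
    using inside by (intro higher_differentiable_on_compose[OF U(1) open_greaterThan _
          higher_differentiable_on_sqrt]) auto
  then have "higher_differentiable_on m U (\<lambda>s. Es i j (sqrt (S s)))" for m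
    using inside by (intro higher_differentiable_on_compose[OF U(1) open_ball _ smooth]) auto
  then show ?thesis
    using U that by (simp add: elen_cadd_cscale S_def)
qed

lemma fdelta_line_higher_differentiable:
  assumes G: "finite G" and stiff: "stiff_bar d G p Es"
  obtains U where "open U" "0 \<in> U" "\<And>m. higher_differentiable_on m U (\<lambda>s. fdelta d G Es p (cscale s q))"
proof -
  define edge_energy where
    "edge_energy e s = Es (fst e) (snd e) (elen d (cadd p (cscale s q)) (fst e) (snd e))" for e s
  have "\<forall>e\<in>G. \<exists>V. open V \<and> 0 \<in> V \<and> (\<forall>m. higher_differentiable_on m V (edge_energy e))"
    unfolding edge_energy_def by (metis stiff_bar_edge_line_higher_differentiable[OF stiff] prod.collapse)
  then obtain V where V: "\<And>e. e \<in> G \<Longrightarrow>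
      open (V e) \<and> 0 \<in> V e \<and> (\<forall>m. higher_differentiable_on m (V e) (edge_energy e))"
    by metis
  define U where "U = (\<Inter>e\<in>G. V e)"
  have U: "open U" "0 \<in> U"
    unfolding U_def using G V by auto
  have "higher_differentiable_on m U (edge_energy e)" if "e \<in> G" for e m
    using V[OF that] by (intro higher_differentiable_on_subset[of U "V e"]) (auto simp: U_def that)
  then have "higher_differentiable_on m U (\<lambda>s. \<Sum>e\<in>G. edge_energy e s - edge_energy e 0)" for m
    by (intro higher_differentiable_on_sum[OF U(1) G] higher_differentiable_on_diff[OF U(1)]
        higher_differentiable_on_const)
  moreover have "fdelta d G Es p (cscale s q) = (\<Sum>e\<in>G. edge_energy e s - edge_energy e 0)" for s
    by (simp add: fdelta_cscale edge_energy_def split_def)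
  ultimately show ?thesis
    using that U by presburger
qed

lemma fdelta_power_line_not_flat:
  assumes G: "finite G" and stiff: "stiff_bar d G p Es" and e0: "(i0, j0) \<in> G"
    and stretch: "(\<Sum>c<d. (p i0 c - p j0 c) * (q i0 c - q j0 c)) \<noteq> 0" and k: "0 < k"
  shows "\<not> (\<forall>m\<le>2 * k. (deriv ^^ m) (\<lambda>t. fdelta d G Es p (cscale (t ^ k) q)) 0 = 0)"
proof
  assume flat: "\<forall>m\<le>2 * k. (deriv ^^ m) (\<lambda>t. fdelta d G Es p (cscale (t ^ k) q)) 0 = 0"
  define F where "F s = fdelta d G Es p (cscale s q)" for s
  obtain U where U: "open U" "0 \<in> U" and smooth: "\<And>m. higher_differentiable_on m U F"
    using fdelta_line_higher_differentiable[OF G stiff] unfolding F_def by blast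
  define V where "V = (\<lambda>t::real. t ^ k) -` U"
  have V: "open V" "0 \<in> V"
    using U k by (auto simp: V_def zero_power intro!: open_vimage continuous_intros)
  have smooth_V: "higher_differentiable_on (Suc (2 * k)) V (\<lambda>t. F (t ^ k))"
    by (rule higher_differentiable_on_compose[OF V(1) U(1) _ smooth
          higher_differentiable_on_power[OF V(1) higher_differentiable_on_id]]) (auto simp: V_def)
  obtain c where "c > 0" and growth: "eventually (\<lambda>s. c * s ^ 2 \<le> F s) (nhds 0)"
    using fdelta_line_quadratic_growth[OF G stiff e0 stretch] unfolding F_def by blast
  have "filterlim (\<lambda>t::real. t ^ k) (nhds (0 ^ k)) (nhds 0)"
    by (intro tendsto_power filterlim_ident)
  then have "filterlim (\<lambda>t::real. t ^ k) (nhds 0) (nhds 0)"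
    using k by (simp add: zero_power)
  from eventually_compose_filterlim[OF growth this]
  have "eventually (\<lambda>t. c * t ^ (2 * k) \<le> F (t ^ k)) (at_right 0)"
    by (auto simp: eventually_at_filter power_mult[symmetric] mult.commute elim: eventually_mono)
  moreover have "\<not> eventually (\<lambda>t. c * t ^ (2 * k) \<le> F (t ^ k)) (at_right 0)"
    using flat k \<open>c > 0\<close> higher_differentiable_on_isCont_deriv[OF smooth_V V(2)]
    by (intro flat_not_eventually_ge_power[OF V higher_differentiable_on_mono[OF _ smooth_V]])
      (auto simp: F_def)
  ultimately show False by contradiction
qed

section \<open>Infinitesimal flexes and the trajectory family\<close>

lemma cnorm_czero [simp]: "cnorm n d czero = 0"
  by (simp add: cnorm_def cinner_def czero_def)

lemma complement_nonzero_stretches_edge: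
  assumes "is_complement n d l (Kspace n d l G p) Kb" "q \<in> Kb" "q \<noteq> czero"
  obtains i j where "(i, j) \<in> G" "(\<Sum>c<d. (p i c - p j c) * (q i c - q j c)) \<noteq> 0"
proof -
  have "q \<in> pinned_space n d l" "q \<notin> Kspace n d l G p"
    using assms by (auto simp: is_complement_def)
  then show ?thesis
    using that by (auto simp: Kspace_def)
qed

lemma dp_family_0 [simp]: "dp_family k P 0 q t = cscale (t ^ k) q"
proof -
  have "(\<Sum>j\<in>{1..k-1}. 0 ^ j * t ^ j * P j i c) = 0" for i c
    by (rule sum.neutral) auto
  then show ?thesis
    by (simp add: dp_family_def cadd_def csum_def cscale_def)
qed

lemma dp_family_has_real_derivative_0:
  assumes "2 \<le> k"
  shows "((\<lambda>t. dp_family k P y q t i c) has_real_derivative y * P 1 i c) (at 0)"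
proof -
  have "((\<lambda>t. (\<Sum>j\<in>{1..k-1}. y ^ j * t ^ j * P j i c) + t ^ k * q i c) has_real_derivative
      (\<Sum>j\<in>{1..k-1}. of_nat j * 0 ^ (j - 1) * y ^ j * P j i c) + of_nat k * 0 ^ (k - 1) * q i c) (at 0)"
    by (auto intro!: derivative_eq_intros)
  moreover have "(\<Sum>j\<in>{1..k-1}. of_nat j * 0 ^ (j - 1) * y ^ j * P j i c) = y * P 1 i c"
  proof -
    have "(\<Sum>j\<in>{1..k-1}. of_nat j * 0 ^ (j - 1) * y ^ j * P j i c)
        = (\<Sum>j\<in>{1..k-1}. if j = 1 then y * P 1 i c else 0)"
      by (rule sum.cong) auto
    also have "\<dots> = y * P 1 i c"
      using assms by simp
    finally show ?thesis .
  qed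
  ultimately show ?thesis
    using assms by (simp add: dp_family_def cadd_def csum_def cscale_def power_0_left)
qed

lemma traj_active_1_iff: "traj_active 1 tr \<longleftrightarrow> (\<exists>i c. deriv (\<lambda>t. tr t i c) 0 \<noteq> 0)"
  by (simp add: traj_active_def traj_vanishing_def k_vanishing_def)

lemma traj_active_dp_family:
  assumes "2 \<le> k" "y \<noteq> 0" "P 1 \<noteq> czero"
  shows "traj_active 1 (\<lambda>t. cadd p (dp_family k P y q t))"
proof -
  obtain i c where "P 1 i c \<noteq> 0"
    using assms(3) by (auto simp: czero_def fun_eq_iff)
  moreover have "((\<lambda>t. cadd p (dp_family k P y q t) i c) has_real_derivative y * P 1 i c) (at 0)"
    unfolding cadd_def using dp_family_has_real_derivative_0[OF assms(1)]
    by (auto intro!: derivative_eq_intros)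
  then have "deriv (\<lambda>t. cadd p (dp_family k P y q t) i c) 0 = y * P 1 i c"
    by (rule DERIV_imp_deriv)
  ultimately show ?thesis
    unfolding traj_active_1_iff using assms(2) by (intro exI[of _ i] exI[of _ c]) simp
qed

theorem lemma7p6:
  fixes n d l k :: nat and G :: "(nat \<times> nat) set" and p :: config
    and Es :: "nat \<Rightarrow> nat \<Rightarrow> real \<Rightarrow> real" and Kb :: "config set"
    and P :: "nat \<Rightarrow> config" and y0 :: real and q0 :: config
  assumes "graph_ok n G"
    and "is_pinned n d l p"
    and "dim_one (Kspace n d l G p)"
    and "is_complement n d l (Kspace n d l G p) Kb"
    and "stiff_bar d G p Es"
    and "2 \<le> k"
    and "is_flex n d l G p 1 (k - 1)
           (\<lambda>t. cadd p (csum (\<lambda>j. cscale (t^j) (P j)) {1..k-1}))"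
    and "cnorm n d (P 1) = 1"
    and "\<forall>j\<in>{2..k-1}. P j \<in> Kb"
    and "\<not> (\<forall>y q. q \<in> Kb \<and> y^2 + (cnorm n d q)^2 = 1 \<longrightarrow>
              taylor_coeff (\<lambda>t. fdelta d G Es p (dp_family k P y q t)) (2*k) > 0)"
    and "\<not> (\<forall>y q. q \<in> Kb \<and> y^2 + (cnorm n d q)^2 = 1 \<longrightarrow>
              taylor_coeff (\<lambda>t. fdelta d G Es p (dp_family k P y q t)) (2*k) < 0)"
    and "\<not> (\<exists>y1 q1 y2 q2. q1 \<in> Kb \<and> y1^2 + (cnorm n d q1)^2 = 1 \<and>
              q2 \<in> Kb \<and> y2^2 + (cnorm n d q2)^2 = 1 \<and>
              taylor_coeff (\<lambda>t. fdelta d G Es p (dp_family k P y1 q1 t)) (2*k) > 0 \<and>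
              taylor_coeff (\<lambda>t. fdelta d G Es p (dp_family k P y2 q2 t)) (2*k) < 0)"
    and "q0 \<in> Kb" and "y0^2 + (cnorm n d q0)^2 = 1"
    and "\<forall>m\<le>2*k. taylor_coeff (\<lambda>t. fdelta d G Es p (dp_family k P y0 q0 t)) m = 0"
  shows "y0 \<noteq> 0 \<and> traj_active 1 (\<lambda>t. cadd p (dp_family k P y0 q0 t))"
proof -
  have "y0 \<noteq> 0"
  proof
    assume "y0 = 0"
    with assms(14) have "q0 \<noteq> czero"
      by auto
    with assms(4,13) obtain i j where "(i, j) \<in> G" "(\<Sum>c<d. (p i c - p j c) * (q0 i c - q0 j c)) \<noteq> 0"
      by (rule complement_nonzero_stretches_edge)
    moreover have "\<forall>m\<le>2 * k. (deriv ^^ m) (\<lambda>t. fdelta d G Es p (cscale (t ^ k) q0)) 0 = 0"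
      using assms(15) \<open>y0 = 0\<close> by (simp add: taylor_coeff_def)
    ultimately show False
      using fdelta_power_line_not_flat[OF graph_ok_finite[OF assms(1)] assms(5)] assms(6) by force
  qed
  moreover have "P 1 \<noteq> czero"
    using assms(8) by auto
  ultimately show ?thesis
    using traj_active_dp_family assms(6) by blast
qed

end
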